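(* For any positive integers $k,\Delta$ with $3 \le k\le \Delta$ and any positive integers $x_1,\dots,x_k$ with $1\le x_j \le \Delta$, $$ \frac2{\Delta-1} \sum_{1\le i<j \le k} \frac1{x_i+x_j+2k-4} \le \sum_{j=1}^k \frac1{x_j+k} \le \frac{\Delta+3}{4} \sum_{1\le i<j \le k} \frac1{x_i+x_j+2k-4} \, . $$ *)

theory Defs
  imports Complex_Main
begin

end

theory Submission
  imports Defs
begin

text \<open>Put \<open>a\<^sub>j = x\<^sub>j + k - 2\<close>, so that \<open>k - 1 \<le> a\<^sub>j \<le> \<Delta> + k - 2\<close>, the pair terms are
  \<open>1/(a\<^sub>i + a\<^sub>j)\<close> and the single terms are \<open>1/(a\<^sub>j + 2)\<close>. For \<open>a, b \<ge> c > 0\<close> the inequality between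
  harmonic and arithmetic means gives \<open>1/(a + b) \<le> (1/a + 1/b)/4 \<le> (c + 2)/(4c) (1/(a + 2) + 1/(b + 2))\<close>,
  and for \<open>a, b \<in> [c, M]\<close> with \<open>M \<ge> 2\<close> one has \<open>(a + b)/(a + 2) \<le> (M + c)/(c + 2)\<close>.
  Summing these pairwise comparisons over all pairs counts every single term \<open>k - 1\<close> times;
  the resulting constants are then compared with \<open>2/(\<Delta> - 1)\<close> and \<open>(\<Delta> + 3)/4\<close> using \<open>3 \<le> k \<le> \<Delta>\<close>.\<close>

lemma sum_pairs_add:
  fixes h :: "nat \<Rightarrow> 'a::comm_semiring_1"
  shows "(\<Sum>(i,j)\<in>{(i,j). 1 \<le> i \<and> i < j \<and> j \<le> n}. h i + h j) = of_nat (n - 1) * (\<Sum>j=1..n. h j)"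
proof (induction n)
  case 0
  have "{(i,j). 1 \<le> i \<and> i < j \<and> j \<le> (0::nat)} = {}" by auto
  then show ?case by (simp only: sum.empty) simp
next
  case (Suc n)
  let ?A = "{(i,j). 1 \<le> i \<and> i < j \<and> j \<le> n}"
  let ?B = "(\<lambda>i. (i, Suc n)) ` {1..n}"
  have "finite ?A"
    by (rule finite_subset[of _ "{1..n} \<times> {1..n}"]) auto
  moreover have "{(i,j). 1 \<le> i \<and> i < j \<and> j \<le> Suc n} = ?A \<union> ?B" and "?A \<inter> ?B = {}"
    by auto
  ultimately have "(\<Sum>(i,j)\<in>{(i,j). 1 \<le> i \<and> i < j \<and> j \<le> Suc n}. h i + h j)
      = (\<Sum>(i,j)\<in>?A. h i + h j) + (\<Sum>(i,j)\<in>?B. h i + h j)"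
    by (simp add: sum.union_disjoint)
  also have "(\<Sum>(i,j)\<in>?B. h i + h j) = (\<Sum>i=1..n. h i) + of_nat n * h (Suc n)"
    by (simp add: sum.reindex inj_on_def sum.distrib)
  finally show ?case using Suc.IH
    by (cases n) (simp_all add: algebra_simps)
qed

lemma sum_pairs_le_scaled_sum:
  fixes f :: "nat \<Rightarrow> nat \<Rightarrow> 'a::{ordered_comm_semiring, comm_semiring_1}" and g :: "nat \<Rightarrow> 'a"
  assumes "\<And>i j. 1 \<le> i \<Longrightarrow> i < j \<Longrightarrow> j \<le> n \<Longrightarrow> f i j \<le> \<alpha> * (g i + g j)"
  shows "(\<Sum>(i,j)\<in>{(i,j). 1 \<le> i \<and> i < j \<and> j \<le> n}. f i j) \<le> \<alpha> * of_nat (n - 1) * (\<Sum>j=1..n. g j)"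
proof -
  have "(\<Sum>(i,j)\<in>{(i,j). 1 \<le> i \<and> i < j \<and> j \<le> n}. f i j)
      \<le> (\<Sum>(i,j)\<in>{(i,j). 1 \<le> i \<and> i < j \<and> j \<le> n}. \<alpha> * (g i + g j))"
    by (rule sum_mono) (auto intro: assms)
  also have "\<dots> = \<alpha> * (\<Sum>(i,j)\<in>{(i,j). 1 \<le> i \<and> i < j \<and> j \<le> n}. g i + g j)"
    by (simp add: sum_distrib_left case_prod_unfold)
  also have "\<dots> = \<alpha> * of_nat (n - 1) * (\<Sum>j=1..n. g j)"
    by (simp only: sum_pairs_add mult.assoc)
  finally show ?thesis .
qed

lemma scaled_sum_le_sum_pairs:
  fixes f :: "nat \<Rightarrow> nat \<Rightarrow> 'a::{ordered_comm_semiring, comm_semiring_1}" and g :: "nat \<Rightarrow> 'a"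
  assumes "\<And>i j. 1 \<le> i \<Longrightarrow> i < j \<Longrightarrow> j \<le> n \<Longrightarrow> \<alpha> * (g i + g j) \<le> f i j"
  shows "\<alpha> * of_nat (n - 1) * (\<Sum>j=1..n. g j) \<le> (\<Sum>(i,j)\<in>{(i,j). 1 \<le> i \<and> i < j \<and> j \<le> n}. f i j)"
proof -
  have "\<alpha> * of_nat (n - 1) * (\<Sum>j=1..n. g j)
      = \<alpha> * (\<Sum>(i,j)\<in>{(i,j). 1 \<le> i \<and> i < j \<and> j \<le> n}. g i + g j)"
    by (simp only: sum_pairs_add mult.assoc)
  also have "\<dots> = (\<Sum>(i,j)\<in>{(i,j). 1 \<le> i \<and> i < j \<and> j \<le> n}. \<alpha> * (g i + g j))"
    by (simp add: sum_distrib_left case_prod_unfold)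
  also have "\<dots> \<le> (\<Sum>(i,j)\<in>{(i,j). 1 \<le> i \<and> i < j \<and> j \<le> n}. f i j)"
    by (rule sum_mono) (auto intro: assms)
  finally show ?thesis .
qed

lemma inverse_add_le_mean_inverse:
  fixes A B :: "'a::linordered_field"
  assumes "0 < A" "0 < B"
  shows "1 / (A + B) \<le> (1 / A + 1 / B) / 4"
proof -
  have "0 \<le> (A - B) * (A - B)" by simp
  then have "4 * A * B \<le> (A + B) * (A + B)" by (simp add: algebra_simps)
  with assms show ?thesis by (simp add: field_simps)
qed

lemma inverse_le_scaled_inverse_shift:
  fixes A c :: "'a::linordered_field"
  assumes "0 < c" "c \<le> A"
  shows "1 / A \<le> (c + 2) / c * (1 / (A + 2))"
proof -
  have "0 < A" "0 < c * (A + 2)" using assms by simp_all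
  moreover have "c * (A + 2) \<le> (c + 2) * A" using assms by (simp add: algebra_simps)
  ultimately show ?thesis by (simp add: divide_simps)
qed

lemma inverse_add_le_shifted_inverses:
  fixes A B c :: "'a::linordered_field"
  assumes "0 < c" "c \<le> A" "c \<le> B"
  shows "1 / (A + B) \<le> (c + 2) / (4 * c) * (1 / (A + 2) + 1 / (B + 2))"
proof -
  define u v where "u = 1 / (A + 2)" and "v = 1 / (B + 2)"
  have "1 / (A + B) \<le> (1 / A + 1 / B) / 4"
    using assms by (intro inverse_add_le_mean_inverse) simp_all
  also have "\<dots> \<le> ((c + 2) / c * u + (c + 2) / c * v) / 4"
    unfolding u_def v_def using assms
    by (intro divide_right_mono add_mono inverse_le_scaled_inverse_shift) simp_all
  also have "\<dots> = (c + 2) / (4 * c) * (u + v)"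
    using assms(1) by (simp add: field_simps)
  finally show ?thesis unfolding u_def v_def .
qed

lemma scaled_shifted_inverse_le_inverse_add:
  fixes A B c M :: "'a::linordered_field"
  assumes "0 < c" "c \<le> A" "0 < A + B" "B \<le> M" "2 \<le> M"
  shows "(c + 2) / (M + c) * (1 / (A + 2)) \<le> 1 / (A + B)"
proof -
  have "(c + 2) * (A + B) \<le> (c + 2) * (A + M)"
    using assms by (intro mult_left_mono) simp_all
  also have "\<dots> = (M + c) * (A + 2) - (A - c) * (M - 2)"
    by (simp add: algebra_simps)
  also have "\<dots> \<le> (M + c) * (A + 2)"
    using assms by simp
  finally have "(c + 2) * (A + B) \<le> (M + c) * (A + 2)" .
  moreover have "0 < M + c" "0 < A + 2" using assms by simp_all
  ultimately show ?thesis using assms(3) by (simp add: divide_simps)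
qed

lemma shifted_inverses_le_inverse_add:
  fixes A B c M :: "'a::linordered_field"
  assumes "0 < c" "c \<le> A" "c \<le> B" "A \<le> M" "B \<le> M" "2 \<le> M"
  shows "(c + 2) / (M + c) * (1 / (A + 2) + 1 / (B + 2)) \<le> 2 / (A + B)"
proof -
  have "(c + 2) / (M + c) * (1 / (A + 2)) \<le> 1 / (A + B)"
    using assms by (intro scaled_shifted_inverse_le_inverse_add) simp_all
  moreover have "(c + 2) / (M + c) * (1 / (B + 2)) \<le> 1 / (A + B)"
    using assms scaled_shifted_inverse_le_inverse_add[of c B A M] by (simp add: add.commute)
  ultimately have "(c + 2) / (M + c) * (1 / (A + 2) + 1 / (B + 2)) \<le> 1 / (A + B) + 1 / (A + B)"
    unfolding distrib_left by (rule add_mono)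
  then show ?thesis by (simp add: add_divide_distrib[symmetric])
qed

definition pair_inverse_sum :: "(nat \<Rightarrow> 'a::field) \<Rightarrow> nat \<Rightarrow> 'a" where
  "pair_inverse_sum a n = (\<Sum>(i,j)\<in>{(i,j). 1 \<le> i \<and> i < j \<and> j \<le> n}. 1 / (a i + a j))"

definition shifted_inverse_sum :: "(nat \<Rightarrow> 'a::field) \<Rightarrow> nat \<Rightarrow> 'a" where
  "shifted_inverse_sum a n = (\<Sum>j=1..n. 1 / (a j + 2))"

lemma shifted_inverse_sum_nonneg:
  fixes a :: "nat \<Rightarrow> 'a::linordered_field"
  assumes "\<And>j. j \<in> {1..n} \<Longrightarrow> 0 \<le> a j"
  shows "0 \<le> shifted_inverse_sum a n"
  unfolding shifted_inverse_sum_def using assms by (intro sum_nonneg) simp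

lemma pair_inverse_sum_le:
  fixes a :: "nat \<Rightarrow> 'a::linordered_field"
  assumes "0 < c" "\<And>j. j \<in> {1..n} \<Longrightarrow> c \<le> a j"
  shows "pair_inverse_sum a n \<le> (c + 2) / (4 * c) * of_nat (n - 1) * shifted_inverse_sum a n"
  unfolding pair_inverse_sum_def shifted_inverse_sum_def using assms
  by (intro sum_pairs_le_scaled_sum inverse_add_le_shifted_inverses) simp_all

lemma shifted_inverse_sum_le:
  fixes a :: "nat \<Rightarrow> 'a::linordered_field"
  assumes "0 < c" "2 \<le> M" "\<And>j. j \<in> {1..n} \<Longrightarrow> c \<le> a j \<and> a j \<le> M"
  shows "(c + 2) / (M + c) * of_nat (n - 1) * shifted_inverse_sum a n \<le> 2 * pair_inverse_sum a n"
proof -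
  have "(c + 2) / (M + c) * of_nat (n - 1) * shifted_inverse_sum a n
      \<le> (\<Sum>(i,j)\<in>{(i,j). 1 \<le> i \<and> i < j \<and> j \<le> n}. 2 / (a i + a j))"
    unfolding shifted_inverse_sum_def using assms
    by (intro scaled_sum_le_sum_pairs shifted_inverses_le_inverse_add) simp_all
  also have "\<dots> = 2 * pair_inverse_sum a n"
    unfolding pair_inverse_sum_def by (simp add: sum_distrib_left case_prod_unfold)
  finally show ?thesis .
qed

lemma lower_constant_of_pair_bound:
  fixes k \<Delta> P S :: real
  assumes "3 \<le> k" "k \<le> \<Delta>" "0 \<le> S" "P \<le> (k + 1) / 4 * S"
  shows "2 / (\<Delta> - 1) * P \<le> S"
proof -
  have "2 / (\<Delta> - 1) * P \<le> 2 / (\<Delta> - 1) * ((k + 1) / 4 * S)"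
    using assms by (intro mult_left_mono) simp_all
  also have "\<dots> = 2 / (\<Delta> - 1) * ((k + 1) / 4) * S"
    by (simp only: mult.assoc)
  also have "\<dots> \<le> 1 * S"
  proof (intro mult_right_mono)
    have "0 < \<Delta> - 1" using assms by simp
    then show "2 / (\<Delta> - 1) * ((k + 1) / 4) \<le> 1"
      using assms by (simp add: field_simps)
  qed (fact \<open>0 \<le> S\<close>)
  finally show ?thesis by simp
qed

lemma upper_constant_of_pair_bound:
  fixes k \<Delta> P S :: real
  assumes "3 \<le> k" "k \<le> \<Delta>" "0 \<le> S" "(k + 1) * (k - 1) / (\<Delta> + 2 * k - 3) * S \<le> 2 * P"
  shows "S \<le> (\<Delta> + 3) / 4 * P"
proof -
  have "0 \<le> (k - 3) * (\<Delta> * (k + 3) + (3 * k - 7))"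
    using assms by (intro mult_nonneg_nonneg add_nonneg_nonneg) simp_all
  then have "8 * (\<Delta> + 2 * k - 3) \<le> (\<Delta> + 3) * ((k + 1) * (k - 1))"
    by (simp add: algebra_simps)
  moreover have "0 < \<Delta> + 2 * k - 3" using assms by simp
  ultimately have "1 \<le> (\<Delta> + 3) / 8 * ((k + 1) * (k - 1) / (\<Delta> + 2 * k - 3))"
    by (simp add: field_simps)
  then have "S \<le> (\<Delta> + 3) / 8 * ((k + 1) * (k - 1) / (\<Delta> + 2 * k - 3)) * S"
    using \<open>0 \<le> S\<close> mult_right_mono by fastforce
  also have "\<dots> = (\<Delta> + 3) / 8 * ((k + 1) * (k - 1) / (\<Delta> + 2 * k - 3) * S)"
    by (simp only: mult.assoc)
  also have "\<dots> \<le> (\<Delta> + 3) / 8 * (2 * P)"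
    using assms by (intro mult_left_mono) simp_all
  finally show ?thesis by (simp add: mult.commute)
qed

lemma pair_inverse_sum_shifted_inverse_sum_bounds:
  fixes a :: "nat \<Rightarrow> real" and \<Delta> :: real
  assumes "3 \<le> k" "real k \<le> \<Delta>"
    and a_range: "\<And>j. j \<in> {1..k} \<Longrightarrow> real k - 1 \<le> a j \<and> a j \<le> \<Delta> + real k - 2"
  shows "2 / (\<Delta> - 1) * pair_inverse_sum a k \<le> shifted_inverse_sum a k
    \<and> shifted_inverse_sum a k \<le> (\<Delta> + 3) / 4 * pair_inverse_sum a k"
proof -
  have k: "3 \<le> real k" "real (k - 1) = real k - 1"
    using assms(1) by (simp_all add: of_nat_diff)
  have "0 \<le> shifted_inverse_sum a k"
    using k a_range by (intro shifted_inverse_sum_nonneg) force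
  moreover have "pair_inverse_sum a k \<le> (real k + 1) / 4 * shifted_inverse_sum a k"
  proof -
    have "real k - 1 \<noteq> 0" using k by simp
    then have "(real k - 1 + 2) / (4 * (real k - 1)) * real (k - 1) = (real k + 1) / 4"
      unfolding k(2) by (simp add: field_simps)
    moreover have "pair_inverse_sum a k
        \<le> (real k - 1 + 2) / (4 * (real k - 1)) * real (k - 1) * shifted_inverse_sum a k"
      using k a_range by (intro pair_inverse_sum_le) auto
    ultimately show ?thesis by (simp only:)
  qed
  moreover have "(real k + 1) * (real k - 1) / (\<Delta> + 2 * real k - 3) * shifted_inverse_sum a k
      \<le> 2 * pair_inverse_sum a k"
  proof -
    have "(real k - 1 + 2) / (\<Delta> + real k - 2 + (real k - 1)) * real (k - 1)
        = (real k + 1) * (real k - 1) / (\<Delta> + 2 * real k - 3)"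
      unfolding k(2) by (simp add: algebra_simps)
    moreover have "(real k - 1 + 2) / (\<Delta> + real k - 2 + (real k - 1)) * real (k - 1)
        * shifted_inverse_sum a k \<le> 2 * pair_inverse_sum a k"
      using k assms(2) a_range by (intro shifted_inverse_sum_le) auto
    ultimately show ?thesis by (simp only:)
  qed
  ultimately show ?thesis
    using k assms(2) lower_constant_of_pair_bound upper_constant_of_pair_bound by blast
qed

theorem corollary3p4:
  fixes k \<Delta> :: nat and x :: "nat \<Rightarrow> nat"
  assumes "3 \<le> k" and "k \<le> \<Delta>"
    and "\<And>j. j \<in> {1..k} \<Longrightarrow> 1 \<le> x j \<and> x j \<le> \<Delta>"
  shows "2 / (real \<Delta> - 1) * (\<Sum>(i,j)\<in>{(i,j). 1 \<le> i \<and> i < j \<and> j \<le> k}. 1 / (real (x i) + real (x j) + 2 * real k - 4))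
           \<le> (\<Sum>j=1..k. 1 / (real (x j) + real k))
         \<and> (\<Sum>j=1..k. 1 / (real (x j) + real k))
           \<le> (real \<Delta> + 3) / 4 * (\<Sum>(i,j)\<in>{(i,j). 1 \<le> i \<and> i < j \<and> j \<le> k}. 1 / (real (x i) + real (x j) + 2 * real k - 4))"
proof -
  define a where "a j = real (x j) + real k - 2" for j
  have "(\<Sum>(i,j)\<in>{(i,j). 1 \<le> i \<and> i < j \<and> j \<le> k}. 1 / (real (x i) + real (x j) + 2 * real k - 4))
      = pair_inverse_sum a k"
    unfolding pair_inverse_sum_def a_def by (intro sum.cong) (auto simp: algebra_simps)
  moreover have "(\<Sum>j=1..k. 1 / (real (x j) + real k)) = shifted_inverse_sum a k"
    unfolding shifted_inverse_sum_def a_def by (intro sum.cong) auto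
  moreover have "2 / (real \<Delta> - 1) * pair_inverse_sum a k \<le> shifted_inverse_sum a k
      \<and> shifted_inverse_sum a k \<le> (real \<Delta> + 3) / 4 * pair_inverse_sum a k"
    using assms by (intro pair_inverse_sum_shifted_inverse_sum_bounds) (auto simp: a_def)
  ultimately show ?thesis by simp
qed

end
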